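(* Let $X=\{1,\dots,n\}$, $Y$ finite, $Q$ a symmetric irreducible stochastic matrix on $Y$ (notation in context). Let $2\le k\le n$, let $\underline a$ be a type with $a_0+\cdots+a_m=k$, $A\subseteq X$ with $|A|=k$, and $F\in P_{k,\underline a,A}$. Then $$D^*_{k,\underline a}D_{k,\underline a}F=|Y|\,(k-\ell(\underline a))\,F+Q_kF.$$
   Context: $Q$ acts on $L(Y)$ by $(Qf)(y)=\sum_{y'}q(y,y')f(y')$, with distinct eigenvalues $\lambda_0=1,\dots,\lambda_m$ and eigenspaces $W_0$ (constants), $W_1,\dots,W_m$; $\sum_yf(y)=0$ for $f\in W_j$, $j\ge1$. $\Theta_k$: functions $\theta$ with $\mathrm{dom}(\theta)$ a $k$-subset of $X$ and values in $Y$; $\varphi\subseteq\theta$ means $\mathrm{dom}\varphi\subseteq\mathrm{dom}\theta$ and $\theta|_{\mathrm{dom}\varphi}=\varphi$. $D_k:L(\Theta_k)\to L(\Theta_{k-1})$, $(D_kF)(\varphi)=\sum_{\theta\supseteq\varphi}F(\theta)$; $D_k^*:L(\Theta_{k-1})\to L(\Theta_k)$, $(D_k^*F)(\theta)=\sum_{\varphi\subseteq\theta}F(\varphi)$. Types $\underline a=(a_0,\dots,a_m)$, $\ell(\underline a)=a_1+\cdots+a_m$, $\underline a'=(a_0-1,a_1,\dots,a_m)$. A fundamental function of type $\underline a$ on a $k$-set $A$ is $F=\bigotimes_{j\in A}F^j$ ($F(\theta)=\prod_{j\in A}F^j(\theta(j))$ on $Y^A$, $0$ elsewhere) with each $F^j$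 in some $W_{i_j}$ and exactly $a_i$ indices $j$ with $i_j=i$; $P_{k,\underline a,A}$ is their span and $P_{k,\underline a}=\bigoplus_AP_{k,\underline a,A}$ ($=\{0\}$ if a type entry is negative). $D_{k,\underline a}$ is the restriction of $D_k$ to $P_{k,\underline a}$ (with values in $P_{k-1,\underline a'}$) and $D^*_{k,\underline a}$ the restriction of $D^*_k$ to $P_{k-1,\underline a'}$. The operator $Q_k$ on $L(\Theta_k)$ is defined on a fundamental function $F=\bigotimes_{j\in A}F^j$ and extended linearly: for $\theta\in\Theta_k$ with $|\mathrm{dom}\theta\cap A|=k-1$, $A\setminus\mathrm{dom}\theta=\{i\}$, $\mathrm{dom}\theta\setminus A=\{i_0\}$, set $(Q_kF)(\theta)=|Y|F(\bar\theta)$ if $F^i\in W_0$ and $(Q_kF)(\theta)=0$ if $F^i\notin W_0$, where $\bar\theta\in Y^A$ agrees with $\theta$ on $A\setminus\{i\}$ and $\bar\theta(i)=\theta(i_0)$; for all other $\theta$, $(Q_kF)(\theta)=0$. *)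

theory Defs
  imports Complex_Main
begin

(* Y is the finite type 'y; X = {1..n} \<subseteq> nat.
   L(Theta_k) is represented by real-valued functions on all partial maps
   (only values on Theta_k matter). *)

definition Qop :: "('y::finite \<Rightarrow> 'y \<Rightarrow> real) \<Rightarrow> ('y \<Rightarrow> real) \<Rightarrow> 'y \<Rightarrow> real" where
  "Qop q f y = (\<Sum>y'\<in>UNIV. q y y' * f y')"

definition sym_irred_stochastic :: "('y::finite \<Rightarrow> 'y \<Rightarrow> real) \<Rightarrow> bool" where
  "sym_irred_stochastic q \<longleftrightarrow>
     (\<forall>y y'. q y y' = q y' y) \<and>
     (\<forall>y y'. 0 \<le> q y y') \<and>
     (\<forall>y. (\<Sum>y'\<in>UNIV. q y y') = 1) \<and>
     (\<forall>y y'. (y, y') \<in> {(u, v). q u v > 0}\<^sup>*)"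

definition eigen_enum :: "('y::finite \<Rightarrow> 'y \<Rightarrow> real) \<Rightarrow> (nat \<Rightarrow> real) \<Rightarrow> nat \<Rightarrow> bool" where
  "eigen_enum q lam m \<longleftrightarrow> lam 0 = 1 \<and> inj_on lam {..m} \<and>
     (\<forall>\<mu>. (\<exists>f. (\<exists>y. f y \<noteq> 0) \<and> Qop q f = (\<lambda>y. \<mu> * f y)) \<longleftrightarrow> \<mu> \<in> lam ` {..m})"

definition W :: "('y::finite \<Rightarrow> 'y \<Rightarrow> real) \<Rightarrow> (nat \<Rightarrow> real) \<Rightarrow> nat \<Rightarrow> ('y \<Rightarrow> real) set" where
  "W q lam i = {f. Qop q f = (\<lambda>y. lam i * f y)}"

definition Theta :: "nat \<Rightarrow> nat \<Rightarrow> (nat \<rightharpoonup> 'y) set" where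
  "Theta n k = {\<theta>. dom \<theta> \<subseteq> {1..n} \<and> card (dom \<theta>) = k}"

definition D :: "nat \<Rightarrow> nat \<Rightarrow> ((nat \<rightharpoonup> 'y) \<Rightarrow> real) \<Rightarrow> (nat \<rightharpoonup> 'y) \<Rightarrow> real" where
  "D n k F \<phi> = (\<Sum>\<theta>\<in>{\<theta>\<in>Theta n k. \<phi> \<subseteq>\<^sub>m \<theta>}. F \<theta>)"

definition Dstar :: "nat \<Rightarrow> nat \<Rightarrow> ((nat \<rightharpoonup> 'y) \<Rightarrow> real) \<Rightarrow> (nat \<rightharpoonup> 'y) \<Rightarrow> real" where
  "Dstar n k G \<theta> = (\<Sum>\<phi>\<in>{\<phi>\<in>Theta n (k - 1). \<phi> \<subseteq>\<^sub>m \<theta>}. G \<phi>)"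

definition tensor :: "nat set \<Rightarrow> (nat \<Rightarrow> 'y \<Rightarrow> real) \<Rightarrow> (nat \<rightharpoonup> 'y) \<Rightarrow> real" where
  "tensor A Fs \<theta> = (if dom \<theta> = A then (\<Prod>j\<in>A. Fs j (the (\<theta> j))) else 0)"

definition fund_data :: "('y::finite \<Rightarrow> 'y \<Rightarrow> real) \<Rightarrow> (nat \<Rightarrow> real) \<Rightarrow> nat \<Rightarrow> (nat \<Rightarrow> nat)
    \<Rightarrow> nat set \<Rightarrow> (nat \<Rightarrow> 'y \<Rightarrow> real) \<Rightarrow> (nat \<Rightarrow> nat) \<Rightarrow> bool" where
  "fund_data q lam m a A Fs idx \<longleftrightarrow>
     (\<forall>j\<in>A. idx j \<le> m \<and> Fs j \<in> W q lam (idx j)) \<and>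
     (\<forall>i\<le>m. card {j\<in>A. idx j = i} = a i)"

definition P :: "('y::finite \<Rightarrow> 'y \<Rightarrow> real) \<Rightarrow> (nat \<Rightarrow> real) \<Rightarrow> nat \<Rightarrow> (nat \<Rightarrow> nat)
    \<Rightarrow> nat set \<Rightarrow> ((nat \<rightharpoonup> 'y) \<Rightarrow> real) set" where
  "P q lam m a A = {F. \<exists>N (cs :: nat \<Rightarrow> real) Fss idxs.
      (\<forall>t<N. fund_data q lam m a A (Fss t) (idxs t)) \<and>
      F = (\<lambda>\<theta>. \<Sum>t<N. cs t * tensor A (Fss t) \<theta>)}"

definition ell :: "nat \<Rightarrow> (nat \<Rightarrow> nat) \<Rightarrow> nat" where
  "ell m a = (\<Sum>i\<in>{1..m}. a i)"

definition Qk_fund :: "('y::finite \<Rightarrow> 'y \<Rightarrow> real) \<Rightarrow> (nat \<Rightarrow> real) \<Rightarrow> nat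
    \<Rightarrow> nat set \<Rightarrow> (nat \<Rightarrow> 'y \<Rightarrow> real) \<Rightarrow> (nat \<rightharpoonup> 'y) \<Rightarrow> real" where
  "Qk_fund q lam n A Fs \<theta> =
     (if \<theta> \<in> Theta n (card A) \<and> card (dom \<theta> \<inter> A) = card A - 1 then
        (let i = the_elem (A - dom \<theta>); i0 = the_elem (dom \<theta> - A) in
         if Fs i \<in> W q lam 0
         then real (card (UNIV :: 'y set)) * tensor A Fs ((\<theta> |` (A - {i}))(i := \<theta> i0))
         else 0)
      else 0)"

definition Qk :: "('y::finite \<Rightarrow> 'y \<Rightarrow> real) \<Rightarrow> (nat \<Rightarrow> real) \<Rightarrow> nat \<Rightarrow> nat \<Rightarrow> nat
    \<Rightarrow> ((nat \<rightharpoonup> 'y) \<Rightarrow> real) \<Rightarrow> (nat \<rightharpoonup> 'y) \<Rightarrow> real" where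
  "Qk q lam m n k F = (SOME G. \<exists>N (cs :: nat \<Rightarrow> real) As Fss idxs.
      (\<forall>t<N. As t \<subseteq> {1..n} \<and> card (As t) = k \<and>
             (\<forall>j\<in>As t. idxs t j \<le> m \<and> Fss t j \<in> W q lam (idxs t j))) \<and>
      F = (\<lambda>\<theta>. \<Sum>t<N. cs t * tensor (As t) (Fss t) \<theta>) \<and>
      G = (\<lambda>\<theta>. \<Sum>t<N. cs t * Qk_fund q lam n (As t) (Fss t) \<theta>))"

end

theory Submission
  imports Defs
begin

text \<open>\<open>D\<^sup>*D F\<close> evaluated at \<open>\<theta>\<close> sums \<open>F\<close> over all maps obtained from \<open>\<theta>\<close> by deleting one
  coordinate and adding one back. If the added coordinate is the deleted one, only its value
  changes; for a fundamental function the sum over the new value multiplies the factor \<open>F\<^sup>i\<close> by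
  \<open>|Y|\<close> when \<open>F\<^sup>i \<in> W\<^sub>0\<close> (eigenfunctions for the eigenvalue 1 of the irreducible \<open>Q\<close> are constant,
  by the maximum principle) and kills it otherwise (eigenfunctions for \<open>\<lambda> \<noteq> 1\<close> of the symmetric
  stochastic \<open>Q\<close> have zero sum). This contributes \<open>|Y| a\<^sub>0 F = |Y| (k - \<ell>(a)) F\<close>. If a coordinate
  is moved, the term survives only when the new domain is the support \<open>A\<close> of \<open>F\<close>, i.e. when
  \<open>\<theta>\<close> misses exactly one point of \<open>A\<close>; the same dichotomy on the missing factor then yields
  exactly \<open>Q\<^sub>k F\<close>.\<close>

lemma sum_Qop:
  assumes "\<forall>y y'. q y y' = q y' y" and "\<forall>y. (\<Sum>y'\<in>UNIV. q y y') = 1"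
  shows "(\<Sum>y\<in>UNIV. Qop q f y) = (\<Sum>y\<in>UNIV. f y)"
proof -
  have "(\<Sum>y\<in>UNIV. Qop q f y) = (\<Sum>y'\<in>UNIV. (\<Sum>y\<in>UNIV. q y' y) * f y')"
    unfolding Qop_def sum_distrib_right using assms(1) by (subst sum.swap) simp
  then show ?thesis using assms(2) by simp
qed

lemma eigenfunction_sum_eq_0:
  assumes sym: "\<forall>y y'. q y y' = q y' y" and stoch: "\<forall>y. (\<Sum>y'\<in>UNIV. q y y') = 1"
    and eigen: "Qop q f = (\<lambda>y. \<mu> * f y)" and "\<mu> \<noteq> 1"
  shows "(\<Sum>y\<in>UNIV. f y) = 0"
proof -
  have "\<mu> * (\<Sum>y\<in>UNIV. f y) = (\<Sum>y\<in>UNIV. Qop q f y)"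
    by (simp add: eigen sum_distrib_left)
  also have "\<dots> = (\<Sum>y\<in>UNIV. f y)"
    using sum_Qop[OF sym stoch] .
  finally show ?thesis using \<open>\<mu> \<noteq> 1\<close> by simp
qed

text \<open>Maximum principle: a harmonic function attains its maximum at every neighbour of a
  maximiser, hence everywhere by irreducibility.\<close>

lemma harmonic_constant:
  fixes q :: "'y::finite \<Rightarrow> 'y \<Rightarrow> real"
  assumes nonneg: "\<forall>y y'. 0 \<le> q y y'" and stoch: "\<forall>y. (\<Sum>y'\<in>UNIV. q y y') = 1"
    and irred: "\<forall>y y'. (y, y') \<in> {(u, v). q u v > 0}\<^sup>*"
    and harmonic: "Qop q f = f"
  shows "f y = f y'"
proof -
  define M where "M = Max (range f)"
  have le_M: "f w \<le> M" for w unfolding M_def by simp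
  have "M \<in> range f" unfolding M_def by (rule Max_in) auto
  then obtain y\<^sub>0 where y\<^sub>0: "f y\<^sub>0 = M" by blast
  have step: "f v = M" if "f u = M" "q u v > 0" for u v
  proof -
    have "(\<Sum>w\<in>UNIV. q u w * (M - f w)) = (\<Sum>w\<in>UNIV. q u w) * M - Qop q f u"
      by (simp add: Qop_def right_diff_distrib sum_subtractf sum_distrib_right)
    also have "\<dots> = 0" using stoch harmonic that(1) by simp
    finally have "\<forall>w\<in>UNIV. q u w * (M - f w) = 0"
      using nonneg le_M by (subst sum_nonneg_eq_0_iff[symmetric]) auto
    then show ?thesis using that(2) by (metis UNIV_I mult_eq_0_iff less_irrefl right_minus_eq)
  qed
  have "f z = M" for z
    using irred[rule_format, of y\<^sub>0 z]
    by (induction rule: rtrancl_induct) (auto simp: y\<^sub>0 step)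
  then show ?thesis by simp
qed

lemma sum_W_0:
  fixes q :: "'y::finite \<Rightarrow> 'y \<Rightarrow> real"
  assumes "sym_irred_stochastic q" and "lam 0 = 1" and "f \<in> W q lam 0"
  shows "(\<Sum>y\<in>UNIV. f y) = real (card (UNIV :: 'y set)) * f y\<^sub>0"
proof -
  have "f = (\<lambda>_. f y\<^sub>0)"
    using assms by (auto simp: sym_irred_stochastic_def W_def intro: harmonic_constant[of q])
  then show ?thesis by (metis sum_constant mult_of_nat_commute)
qed

lemma sum_W_nonzero:
  assumes "sym_irred_stochastic q" and "eigen_enum q lam m"
    and "i \<le> m" and "i \<noteq> 0" and "f \<in> W q lam i"
  shows "(\<Sum>y\<in>UNIV. f y) = 0"
proof (rule eigenfunction_sum_eq_0)
  have "inj_on lam {..m}" and "lam 0 = 1"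
    using \<open>eigen_enum q lam m\<close> unfolding eigen_enum_def by blast+
  then show "lam i \<noteq> 1"
    using \<open>i \<le> m\<close> \<open>i \<noteq> 0\<close> by (metis atMost_iff inj_on_eq_iff le0)
qed (use assms in \<open>auto simp: sym_irred_stochastic_def W_def\<close>)

lemma sum_W:
  fixes q :: "'y::finite \<Rightarrow> 'y \<Rightarrow> real"
  assumes "sym_irred_stochastic q" and "eigen_enum q lam m" and "i \<le> m" and "f \<in> W q lam i"
  shows "(\<Sum>y\<in>UNIV. f y) = (if i = 0 then real (card (UNIV :: 'y set)) * f y\<^sub>0 else 0)"
  using assms sum_W_0[of q lam f] sum_W_nonzero[of q lam m i f]
  by (auto simp: eigen_enum_def)

lemma map_le_dom_insert:
  assumes le: "\<phi> \<subseteq>\<^sub>m \<theta>" and dom: "dom \<theta> = insert i (dom \<phi>)" and i: "i \<notin> dom \<phi>"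
  shows "\<phi> = \<theta>(i := None)" and "\<theta> = \<phi>(i \<mapsto> the (\<theta> i))"
proof -
  have "\<phi> x = \<theta> x" if "x \<noteq> i" for x
    using le dom that unfolding map_le_def by (cases "x \<in> dom \<phi>") auto
  moreover have "i \<in> dom \<theta>" using dom by simp
  ultimately show "\<phi> = \<theta>(i := None)" and "\<theta> = \<phi>(i \<mapsto> the (\<theta> i))"
    using i by (auto simp: fun_eq_iff)
qed

lemma Theta_finite_dom: "\<theta> \<in> Theta n k \<Longrightarrow> finite (dom \<theta>)"
  unfolding Theta_def by (auto intro: finite_subset)

lemma Theta_lower_neighbours:
  assumes \<theta>: "\<theta> \<in> Theta n k" and k: "1 \<le> k"
  shows "{\<phi>\<in>Theta n (k - 1). \<phi> \<subseteq>\<^sub>m \<theta>} = (\<lambda>i. \<theta>(i := None)) ` dom \<theta>"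
    and "inj_on (\<lambda>i. \<theta>(i := None)) (dom \<theta>)"
proof -
  have fin: "finite (dom \<theta>)" using \<theta> by (rule Theta_finite_dom)
  show "{\<phi>\<in>Theta n (k - 1). \<phi> \<subseteq>\<^sub>m \<theta>} = (\<lambda>i. \<theta>(i := None)) ` dom \<theta>"
  proof (intro equalityI subsetI)
    fix \<phi> assume "\<phi> \<in> {\<phi>\<in>Theta n (k - 1). \<phi> \<subseteq>\<^sub>m \<theta>}"
    then have le: "\<phi> \<subseteq>\<^sub>m \<theta>" and card: "card (dom \<phi>) = k - 1" unfolding Theta_def by auto
    have sub: "dom \<phi> \<subseteq> dom \<theta>" using le by (rule map_le_implies_dom_le)
    then have "card (dom \<theta> - dom \<phi>) = 1"
      using fin card \<theta> k by (simp add: card_Diff_subset finite_subset Theta_def)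
    then obtain i where i: "dom \<theta> - dom \<phi> = {i}" by (rule card_1_singletonE)
    then have "\<phi> = \<theta>(i := None)" using sub by (intro map_le_dom_insert(1)[OF le]) auto
    with i show "\<phi> \<in> (\<lambda>i. \<theta>(i := None)) ` dom \<theta>" by blast
  next
    fix \<phi> assume "\<phi> \<in> (\<lambda>i. \<theta>(i := None)) ` dom \<theta>"
    then obtain i where "i \<in> dom \<theta>" "\<phi> = \<theta>(i := None)" by blast
    then show "\<phi> \<in> {\<phi>\<in>Theta n (k - 1). \<phi> \<subseteq>\<^sub>m \<theta>}"
      using \<theta> fin by (auto simp: Theta_def)
  qed
  show "inj_on (\<lambda>i. \<theta>(i := None)) (dom \<theta>)"
    by (rule inj_onI) (metis domIff fun_upd_apply)
qed

lemma Theta_upper_neighbours: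
  assumes \<phi>: "\<phi> \<in> Theta n (k - 1)" and k: "1 \<le> k"
  shows "{\<theta>\<in>Theta n k. \<phi> \<subseteq>\<^sub>m \<theta>} = (\<lambda>(j, y). \<phi>(j \<mapsto> y)) ` (({1..n} - dom \<phi>) \<times> UNIV)"
    and "inj_on (\<lambda>(j, y). \<phi>(j \<mapsto> y)) (({1..n} - dom \<phi>) \<times> UNIV)"
proof -
  have fin: "finite (dom \<phi>)" using \<phi> by (rule Theta_finite_dom)
  show "{\<theta>\<in>Theta n k. \<phi> \<subseteq>\<^sub>m \<theta>} = (\<lambda>(j, y). \<phi>(j \<mapsto> y)) ` (({1..n} - dom \<phi>) \<times> UNIV)"
  proof (intro equalityI subsetI)
    fix \<theta> assume "\<theta> \<in> {\<theta>\<in>Theta n k. \<phi> \<subseteq>\<^sub>m \<theta>}"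
    then have le: "\<phi> \<subseteq>\<^sub>m \<theta>" and \<theta>: "\<theta> \<in> Theta n k" by auto
    have sub: "dom \<phi> \<subseteq> dom \<theta>" using le by (rule map_le_implies_dom_le)
    then have "card (dom \<theta> - dom \<phi>) = 1"
      using fin \<phi> \<theta> k by (simp add: card_Diff_subset Theta_def)
    then obtain j where j: "dom \<theta> - dom \<phi> = {j}" by (rule card_1_singletonE)
    then have "\<theta> = \<phi>(j \<mapsto> the (\<theta> j))" using sub by (intro map_le_dom_insert(2)[OF le]) auto
    moreover have "j \<in> {1..n} - dom \<phi>" using j \<theta> unfolding Theta_def by blast
    ultimately show "\<theta> \<in> (\<lambda>(j, y). \<phi>(j \<mapsto> y)) ` (({1..n} - dom \<phi>) \<times> UNIV)"
      by (intro image_eqI[where x = "(j, the (\<theta> j))"]) auto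
  next
    fix \<theta> assume "\<theta> \<in> (\<lambda>(j, y). \<phi>(j \<mapsto> y)) ` (({1..n} - dom \<phi>) \<times> UNIV)"
    then obtain j y where "j \<in> {1..n} - dom \<phi>" "\<theta> = \<phi>(j \<mapsto> y)" by (auto simp del: atLeastAtMost_iff)
    then show "\<theta> \<in> {\<theta>\<in>Theta n k. \<phi> \<subseteq>\<^sub>m \<theta>}"
      using \<phi> fin k by (auto simp: Theta_def map_le_def)
  qed
  show "inj_on (\<lambda>(j, y). \<phi>(j \<mapsto> y)) (({1..n} - dom \<phi>) \<times> UNIV)"
    by (rule inj_onI) (auto simp: fun_eq_iff split: if_splits)
qed

definition resample :: "((nat \<rightharpoonup> 'y::finite) \<Rightarrow> real) \<Rightarrow> (nat \<rightharpoonup> 'y) \<Rightarrow> real" where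
  "resample f \<theta> = (\<Sum>i\<in>dom \<theta>. \<Sum>y\<in>UNIV. f (\<theta>(i \<mapsto> y)))"

definition relocate :: "nat \<Rightarrow> ((nat \<rightharpoonup> 'y::finite) \<Rightarrow> real) \<Rightarrow> (nat \<rightharpoonup> 'y) \<Rightarrow> real" where
  "relocate n f \<theta> = (\<Sum>i\<in>dom \<theta>. \<Sum>j\<in>{1..n} - dom \<theta>. \<Sum>y\<in>UNIV. f (\<theta>(i := None, j \<mapsto> y)))"

lemma D_lower_neighbour:
  assumes \<theta>: "\<theta> \<in> Theta n k" and k: "1 \<le> k" and i: "i \<in> dom \<theta>"
  shows "D n k f (\<theta>(i := None)) =
    (\<Sum>y\<in>UNIV. f (\<theta>(i \<mapsto> y))) + (\<Sum>j\<in>{1..n} - dom \<theta>. \<Sum>y\<in>UNIV. f (\<theta>(i := None, j \<mapsto> y)))"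
proof -
  define \<phi> where "\<phi> = \<theta>(i := None)"
  have \<phi>: "\<phi> \<in> Theta n (k - 1)"
    using Theta_lower_neighbours(1)[OF \<theta> k] i unfolding \<phi>_def by blast
  have free: "{1..n} - dom \<phi> = insert i ({1..n} - dom \<theta>)"
    using \<theta> i unfolding \<phi>_def Theta_def by auto
  have "D n k f \<phi> = (\<Sum>(j, y)\<in>({1..n} - dom \<phi>) \<times> UNIV. f (\<phi>(j \<mapsto> y)))"
    unfolding D_def Theta_upper_neighbours(1)[OF \<phi> k]
    by (subst sum.reindex[OF Theta_upper_neighbours(2)[OF \<phi> k]]) (simp add: case_prod_beta')
  also have "\<dots> = (\<Sum>j\<in>insert i ({1..n} - dom \<theta>). \<Sum>y\<in>UNIV. f (\<phi>(j \<mapsto> y)))"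
    by (simp only: free sum.cartesian_product)
  also have "\<dots> = (\<Sum>y\<in>UNIV. f (\<phi>(i \<mapsto> y))) + (\<Sum>j\<in>{1..n} - dom \<theta>. \<Sum>y\<in>UNIV. f (\<phi>(j \<mapsto> y)))"
    using i by (simp add: sum.insert)
  finally show ?thesis
    unfolding \<phi>_def by simp
qed

lemma Dstar_D:
  assumes \<theta>: "\<theta> \<in> Theta n k" and k: "1 \<le> k"
  shows "Dstar n k (D n k f) \<theta> = resample f \<theta> + relocate n f \<theta>"
proof -
  have "Dstar n k (D n k f) \<theta> = (\<Sum>i\<in>dom \<theta>. D n k f (\<theta>(i := None)))"
    unfolding Dstar_def Theta_lower_neighbours(1)[OF \<theta> k]
    by (simp add: sum.reindex[OF Theta_lower_neighbours(2)[OF \<theta> k]])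
  also have "\<dots> = resample f \<theta> + relocate n f \<theta>"
    unfolding resample_def relocate_def sum.distrib[symmetric]
    by (intro sum.cong refl D_lower_neighbour[OF \<theta> k])
  finally show ?thesis .
qed

lemma resample_sum:
  "resample (\<lambda>x. \<Sum>t\<in>T. c t * g t x) \<theta> = (\<Sum>t\<in>T. c t * resample (g t) \<theta>)"
  unfolding resample_def sum_distrib_left
  by (subst sum.swap, rule sum.cong[OF refl], subst sum.swap, simp)

lemma relocate_sum:
  "relocate n (\<lambda>x. \<Sum>t\<in>T. c t * g t x) \<theta> = (\<Sum>t\<in>T. c t * relocate n (g t) \<theta>)"
  unfolding relocate_def sum_distrib_left
  by (subst (2) sum.swap, subst (3) sum.swap, subst (4) sum.swap) simp

lemma tensor_remove:
  assumes "finite A" and "i \<in> A" and "dom \<theta> = A"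
  shows "tensor A Fs \<theta> = Fs i (the (\<theta> i)) * (\<Prod>l\<in>A - {i}. Fs l (the (\<theta> l)))"
  using assms by (simp add: tensor_def prod.remove)

lemma sum_tensor_upd:
  assumes "finite A" and "i \<in> A" and "dom \<psi> = A - {i}"
  shows "(\<Sum>y\<in>UNIV. tensor A Fs (\<psi>(i \<mapsto> y))) = (\<Sum>y\<in>UNIV. Fs i y) * (\<Prod>l\<in>A - {i}. Fs l (the (\<psi> l)))"
proof -
  have "tensor A Fs (\<psi>(i \<mapsto> y)) = Fs i y * (\<Prod>l\<in>A - {i}. Fs l (the (\<psi> l)))" for y
    using assms by (subst tensor_remove[of A i]) (auto intro!: prod.cong)
  then show ?thesis by (simp add: sum_distrib_right)
qed

lemma resample_tensor:
  fixes q :: "'y::finite \<Rightarrow> 'y \<Rightarrow> real"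
  assumes sis: "sym_irred_stochastic q" and ee: "eigen_enum q lam m" and fin: "finite A"
    and Fs: "\<forall>l\<in>A. idx l \<le> m \<and> Fs l \<in> W q lam (idx l)"
  shows "resample (tensor A Fs) \<theta>
    = real (card (UNIV :: 'y set)) * real (card {l\<in>A. idx l = 0}) * tensor A Fs \<theta>"
proof (cases "dom \<theta> = A")
  case False
  then show ?thesis by (simp add: resample_def tensor_def insert_absorb)
next
  case dom: True
  have "(\<Sum>y\<in>UNIV. tensor A Fs (\<theta>(i \<mapsto> y)))
      = (if idx i = 0 then real (card (UNIV :: 'y set)) * tensor A Fs \<theta> else 0)" if i: "i \<in> A" for i
  proof -
    have "(\<Sum>y\<in>UNIV. tensor A Fs (\<theta>(i \<mapsto> y)))
        = (\<Sum>y\<in>UNIV. Fs i y) * (\<Prod>l\<in>A - {i}. Fs l (the (\<theta> l)))"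
      using sum_tensor_upd[OF fin i, of "\<theta>(i := None)" Fs] dom
      by (simp add: prod.cong[OF refl, of "A - {i}" "\<lambda>l. Fs l (the ((\<theta>(i := None)) l))"])
    then show ?thesis
      using sum_W[OF sis ee, of "idx i" "Fs i" "the (\<theta> i)"] Fs i tensor_remove[OF fin i dom]
      by auto
  qed
  then have "resample (tensor A Fs) \<theta>
      = (\<Sum>i\<in>A. if idx i = 0 then real (card (UNIV :: 'y set)) * tensor A Fs \<theta> else 0)"
    unfolding resample_def dom by (rule sum.cong[OF refl])
  also have "\<dots> = real (card (UNIV :: 'y set)) * real (card {l\<in>A. idx l = 0}) * tensor A Fs \<theta>"
    by (simp add: sum.If_cases[OF fin] Int_def conj_commute)
  finally show ?thesis .
qed

lemma sum_sum_eq_single: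
  assumes "finite I" and "finite J" and "i\<^sub>0 \<in> I" and "j\<^sub>0 \<in> J"
    and "\<And>i j. i \<in> I \<Longrightarrow> j \<in> J \<Longrightarrow> (i, j) \<noteq> (i\<^sub>0, j\<^sub>0) \<Longrightarrow> g i j = 0"
  shows "(\<Sum>i\<in>I. \<Sum>j\<in>J. g i j) = g i\<^sub>0 j\<^sub>0"
proof -
  have "(\<Sum>j\<in>J. g i j) = (if i = i\<^sub>0 then g i\<^sub>0 j\<^sub>0 else 0)" if "i \<in> I" for i
    using assms that by (auto simp: sum.remove[of J j\<^sub>0] intro!: sum.neutral)
  then show ?thesis using assms(1,3) by (simp add: sum.If_cases)
qed

lemma card_Int_eq_card_minus_1_iff:
  assumes "finite A" and "finite B" and "card B = card A" and "A \<noteq> {}"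
  shows "card (B \<inter> A) = card A - 1 \<longleftrightarrow> (\<exists>i\<^sub>0 j\<^sub>0. B - A = {i\<^sub>0} \<and> A - B = {j\<^sub>0})"
proof -
  have "card (A - B) = card A - card (B \<inter> A)" and "card (B - A) = card A - card (B \<inter> A)"
    using assms by (simp_all add: card_Diff_subset_Int Int_commute)
  moreover have "card (B \<inter> A) \<le> card A" using assms by (simp add: card_mono)
  moreover have "0 < card A" using assms by (simp add: card_gt_0_iff)
  ultimately show ?thesis by (auto simp: card_1_singleton_iff[symmetric])
qed

lemma tensor_relocated_nonzero:
  assumes "tensor A Fs (\<theta>(i := None, j \<mapsto> y)) \<noteq> 0" and "i \<in> dom \<theta>" and "j \<notin> dom \<theta>"
  shows "dom \<theta> - A = {i}" and "A - dom \<theta> = {j}"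
proof -
  have "insert j (dom \<theta> - {i}) = A"
    using assms(1) by (auto simp: tensor_def split: if_splits)
  then show "dom \<theta> - A = {i}" and "A - dom \<theta> = {j}" using assms(2,3) by auto
qed

lemma Qk_fund_swap:
  fixes q :: "'y::finite \<Rightarrow> 'y \<Rightarrow> real"
  assumes "A \<noteq> {}" and "finite A" and \<theta>: "\<theta> \<in> Theta n (card A)"
    and i\<^sub>0: "dom \<theta> - A = {i\<^sub>0}" and j\<^sub>0: "A - dom \<theta> = {j\<^sub>0}"
  shows "Qk_fund q lam n A Fs \<theta> = (if Fs j\<^sub>0 \<in> W q lam 0
    then real (card (UNIV :: 'y set)) * Fs j\<^sub>0 (the (\<theta> i\<^sub>0)) * (\<Prod>l\<in>A - {j\<^sub>0}. Fs l (the (\<theta> l)))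
    else 0)"
proof -
  have "card (dom \<theta> \<inter> A) = card A - 1"
    using assms Theta_finite_dom[OF \<theta>] card_Int_eq_card_minus_1_iff[of A "dom \<theta>"]
    by (auto simp: Theta_def)
  then have "Qk_fund q lam n A Fs \<theta> = (if Fs j\<^sub>0 \<in> W q lam 0
      then real (card (UNIV :: 'y set)) * tensor A Fs ((\<theta> |` (A - {j\<^sub>0}))(j\<^sub>0 := \<theta> i\<^sub>0)) else 0)"
    using \<theta> i\<^sub>0 j\<^sub>0 by (simp add: Qk_fund_def)
  moreover have "tensor A Fs ((\<theta> |` (A - {j\<^sub>0}))(j\<^sub>0 := \<theta> i\<^sub>0))
      = Fs j\<^sub>0 (the (\<theta> i\<^sub>0)) * (\<Prod>l\<in>A - {j\<^sub>0}. Fs l (the (\<theta> l)))"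
    using assms by (subst tensor_remove[of A j\<^sub>0]) (auto intro!: prod.cong)
  ultimately show ?thesis by simp
qed

lemma relocate_tensor_swap:
  assumes "finite A" and "A \<subseteq> {1..n}" and "finite (dom \<theta>)"
    and i\<^sub>0: "dom \<theta> - A = {i\<^sub>0}" and j\<^sub>0: "A - dom \<theta> = {j\<^sub>0}"
  shows "relocate n (tensor A Fs) \<theta> = (\<Sum>y\<in>UNIV. Fs j\<^sub>0 y) * (\<Prod>l\<in>A - {j\<^sub>0}. Fs l (the (\<theta> l)))"
proof -
  have "relocate n (tensor A Fs) \<theta> = (\<Sum>y\<in>UNIV. tensor A Fs (\<theta>(i\<^sub>0 := None, j\<^sub>0 \<mapsto> y)))"
    unfolding relocate_def
  proof (rule sum_sum_eq_single)
    show "i\<^sub>0 \<in> dom \<theta>" "j\<^sub>0 \<in> {1..n} - dom \<theta>" using i\<^sub>0 j\<^sub>0 \<open>A \<subseteq> {1..n}\<close> by auto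
    show "(\<Sum>y\<in>UNIV. tensor A Fs (\<theta>(i := None, j \<mapsto> y))) = 0"
      if "i \<in> dom \<theta>" "j \<in> {1..n} - dom \<theta>" "(i, j) \<noteq> (i\<^sub>0, j\<^sub>0)" for i j
    proof -
      have "tensor A Fs (\<theta>(i := None, j \<mapsto> y)) = 0" for y
      proof (rule ccontr)
        assume "tensor A Fs (\<theta>(i := None, j \<mapsto> y)) \<noteq> 0"
        from tensor_relocated_nonzero[OF this] that i\<^sub>0 j\<^sub>0 show False by auto
      qed
      then show ?thesis by simp
    qed
  qed (use \<open>finite (dom \<theta>)\<close> in auto)
  also have "\<dots> = (\<Sum>y\<in>UNIV. Fs j\<^sub>0 y) * (\<Prod>l\<in>A - {j\<^sub>0}. Fs l (the (\<theta> l)))"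
  proof -
    have "j\<^sub>0 \<in> A" and "dom (\<theta>(i\<^sub>0 := None)) = A - {j\<^sub>0}" using i\<^sub>0 j\<^sub>0 by auto
    note sum_tensor_upd[OF \<open>finite A\<close> this, of Fs]
    moreover have "(\<Prod>l\<in>A - {j\<^sub>0}. Fs l (the ((\<theta>(i\<^sub>0 := None)) l)))
        = (\<Prod>l\<in>A - {j\<^sub>0}. Fs l (the (\<theta> l)))"
      using i\<^sub>0 by (intro prod.cong) auto
    ultimately show ?thesis by simp
  qed
  finally show ?thesis .
qed

lemma relocate_tensor_eq_0:
  assumes "\<nexists>i\<^sub>0 j\<^sub>0. dom \<theta> - A = {i\<^sub>0} \<and> A - dom \<theta> = {j\<^sub>0}"
  shows "relocate n (tensor A Fs) \<theta> = 0"
proof -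
  have "tensor A Fs (\<theta>(i := None, j \<mapsto> y)) = 0" if "i \<in> dom \<theta>" "j \<notin> dom \<theta>" for i j y
  proof (rule ccontr)
    assume "tensor A Fs (\<theta>(i := None, j \<mapsto> y)) \<noteq> 0"
    from tensor_relocated_nonzero[OF this that] assms show False by blast
  qed
  then show ?thesis by (simp add: relocate_def)
qed

lemma relocate_tensor:
  fixes q :: "'y::finite \<Rightarrow> 'y \<Rightarrow> real"
  assumes sis: "sym_irred_stochastic q" and ee: "eigen_enum q lam m"
    and A: "A \<subseteq> {1..n}" "A \<noteq> {}" and \<theta>: "\<theta> \<in> Theta n (card A)"
    and Fs: "\<forall>l\<in>A. idx l \<le> m \<and> Fs l \<in> W q lam (idx l)"
  shows "relocate n (tensor A Fs) \<theta> = Qk_fund q lam n A Fs \<theta>"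
proof -
  have finA: "finite A" using A(1) by (rule finite_subset) simp
  have fin\<theta>: "finite (dom \<theta>)" using \<theta> by (rule Theta_finite_dom)
  show ?thesis
  proof (cases "\<exists>i\<^sub>0 j\<^sub>0. dom \<theta> - A = {i\<^sub>0} \<and> A - dom \<theta> = {j\<^sub>0}")
    case True
    then obtain i\<^sub>0 j\<^sub>0 where i\<^sub>0: "dom \<theta> - A = {i\<^sub>0}" and j\<^sub>0: "A - dom \<theta> = {j\<^sub>0}" by blast
    note relocate = relocate_tensor_swap[OF finA A(1) fin\<theta> i\<^sub>0 j\<^sub>0, of Fs]
    note Qk_fund = Qk_fund_swap[OF A(2) finA \<theta> i\<^sub>0 j\<^sub>0, of q lam Fs]
    show ?thesis
    proof (cases "Fs j\<^sub>0 \<in> W q lam 0")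
      case True
      then show ?thesis
        using relocate Qk_fund sum_W_0[OF sis _ True, of "the (\<theta> i\<^sub>0)"] ee
        by (simp add: eigen_enum_def)
    next
      case False
      from j\<^sub>0 Fs have "idx j\<^sub>0 \<le> m" and Fs\<^sub>0: "Fs j\<^sub>0 \<in> W q lam (idx j\<^sub>0)" by auto
      moreover from Fs\<^sub>0 False have "idx j\<^sub>0 \<noteq> 0" by metis
      ultimately show ?thesis
        using relocate Qk_fund sum_W_nonzero[OF sis ee] False by simp
    qed
  next
    case False
    then have "card (dom \<theta> \<inter> A) \<noteq> card A - 1"
      using card_Int_eq_card_minus_1_iff[OF finA fin\<theta> _ A(2)] \<theta> by (simp add: Theta_def)
    then have "Qk_fund q lam n A Fs \<theta> = 0" by (simp add: Qk_fund_def)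
    moreover have "relocate n (tensor A Fs) \<theta> = 0" using False by (rule relocate_tensor_eq_0)
    ultimately show ?thesis by simp
  qed
qed

lemma resample_P:
  fixes q :: "'y::finite \<Rightarrow> 'y \<Rightarrow> real"
  assumes sis: "sym_irred_stochastic q" and ee: "eigen_enum q lam m"
    and "finite A" and "F \<in> P q lam m a A"
  shows "resample F \<theta> = real (card (UNIV :: 'y set)) * real (a 0) * F \<theta>"
proof -
  obtain N :: nat and cs Fss idxs where fund: "\<forall>t<N. fund_data q lam m a A (Fss t) (idxs t)"
    and F: "F = (\<lambda>\<theta>. \<Sum>t<N. cs t * tensor A (Fss t) \<theta>)"
    using \<open>F \<in> P q lam m a A\<close> unfolding P_def mem_Collect_eq by blast
  have "resample (tensor A (Fss t)) \<theta>
      = real (card (UNIV :: 'y set)) * real (a 0) * tensor A (Fss t) \<theta>" if "t < N" for t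
    using resample_tensor[OF sis ee \<open>finite A\<close>, of "idxs t" "Fss t"] fund that
    by (simp add: fund_data_def)
  then show ?thesis
    unfolding F resample_sum by (simp add: sum_distrib_left mult_ac)
qed

text \<open>\<open>Qk\<close> chooses some representation of \<open>F\<close> by fundamental functions; the choice is
  immaterial because \<open>relocate\<close> is linear and agrees with \<open>Qk_fund\<close> on each of them.\<close>

lemma Qk_eq_relocate:
  fixes q :: "'y::finite \<Rightarrow> 'y \<Rightarrow> real"
  assumes sis: "sym_irred_stochastic q" and ee: "eigen_enum q lam m"
    and A: "A \<subseteq> {1..n}" "card A = k" and "1 \<le> k" and "F \<in> P q lam m a A"
    and \<theta>: "\<theta> \<in> Theta n k"
  shows "Qk q lam m n k F \<theta> = relocate n F \<theta>"
proof -
  let ?is_Qk = "\<lambda>G. \<exists>N (cs :: nat \<Rightarrow> real) As Fss idxs.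
      (\<forall>t<N. As t \<subseteq> {1..n} \<and> card (As t) = k \<and>
             (\<forall>j\<in>As t. idxs t j \<le> m \<and> Fss t j \<in> W q lam (idxs t j))) \<and>
      F = (\<lambda>\<theta>. \<Sum>t<N. cs t * tensor (As t) (Fss t) \<theta>) \<and>
      G = (\<lambda>\<theta>. \<Sum>t<N. cs t * Qk_fund q lam n (As t) (Fss t) \<theta>)"
  obtain N :: nat and cs Fss idxs where fund: "\<forall>t<N. fund_data q lam m a A (Fss t) (idxs t)"
    and F: "F = (\<lambda>\<theta>. \<Sum>t<N. cs t * tensor A (Fss t) \<theta>)"
    using \<open>F \<in> P q lam m a A\<close> unfolding P_def mem_Collect_eq by blast
  have "?is_Qk (\<lambda>\<theta>. \<Sum>t<N. cs t * Qk_fund q lam n A (Fss t) \<theta>)"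
    using fund F A by (intro exI[of _ N] exI[of _ cs] exI[of _ "\<lambda>_. A"] exI[of _ Fss] exI[of _ idxs])
      (auto simp: fund_data_def)
  then have "?is_Qk (Qk q lam m n k F)"
    unfolding Qk_def by (rule someI[where P = ?is_Qk])
  then show ?thesis
  proof (elim exE conjE)
    fix N' cs' As Fss' idxs'
    assume rep: "\<forall>t<N'. As t \<subseteq> {1..n} \<and> card (As t) = k \<and>
             (\<forall>j\<in>As t. idxs' t j \<le> m \<and> Fss' t j \<in> W q lam (idxs' t j))"
      and F': "F = (\<lambda>\<theta>. \<Sum>t<N'. cs' t * tensor (As t) (Fss' t) \<theta>)"
      and Qk: "Qk q lam m n k F = (\<lambda>\<theta>. \<Sum>t<N'. cs' t * Qk_fund q lam n (As t) (Fss' t) \<theta>)"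
    have fund_eq: "Qk_fund q lam n (As t) (Fss' t) \<theta> = relocate n (tensor (As t) (Fss' t)) \<theta>"
      if "t < N'" for t
    proof -
      have "As t \<subseteq> {1..n}" "card (As t) = k" "\<forall>j\<in>As t. idxs' t j \<le> m \<and> Fss' t j \<in> W q lam (idxs' t j)"
        using rep that by auto
      moreover from this(2) \<open>1 \<le> k\<close> have "As t \<noteq> {}" by auto
      ultimately show ?thesis using relocate_tensor[OF sis ee] \<theta> by simp
    qed
    have "Qk q lam m n k F \<theta> = (\<Sum>t<N'. cs' t * Qk_fund q lam n (As t) (Fss' t) \<theta>)"
      using Qk by simp
    also have "\<dots> = (\<Sum>t<N'. cs' t * relocate n (tensor (As t) (Fss' t)) \<theta>)"
      using fund_eq by simp
    also have "\<dots> = relocate n F \<theta>"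
      unfolding F' relocate_sum ..
    finally show ?thesis .
  qed
qed

lemma sum_atMost_eq_ell: "(\<Sum>i\<le>m. a i) = a 0 + ell m a"
  by (simp add: ell_def atMost_atLeast0 sum.atLeast_Suc_atMost)

theorem lemma7p4:
  fixes q :: "'y::finite \<Rightarrow> 'y \<Rightarrow> real"
    and lam :: "nat \<Rightarrow> real" and m n k :: nat and a :: "nat \<Rightarrow> nat"
    and A :: "nat set" and F :: "(nat \<rightharpoonup> 'y) \<Rightarrow> real"
  assumes "sym_irred_stochastic q"
    and "eigen_enum q lam m"
    and "2 \<le> k" and "k \<le> n"
    and "(\<Sum>i\<le>m. a i) = k"
    and "A \<subseteq> {1..n}" and "card A = k"
    and "F \<in> P q lam m a A"
  shows "\<forall>\<theta>\<in>Theta n k.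
           Dstar n k (D n k F) \<theta>
             = real (card (UNIV :: 'y set)) * (real k - real (ell m a)) * F \<theta> + Qk q lam m n k F \<theta>"
proof
  fix \<theta> :: "nat \<rightharpoonup> 'y" assume \<theta>: "\<theta> \<in> Theta n k"
  have k: "1 \<le> k" using \<open>2 \<le> k\<close> by simp
  have "finite A" using \<open>A \<subseteq> {1..n}\<close> by (rule finite_subset) simp
  have resample: "resample F \<theta> = real (card (UNIV :: 'y set)) * real (a 0) * F \<theta>"
    using resample_P[OF assms(1,2) \<open>finite A\<close> assms(8)] .
  have relocate: "relocate n F \<theta> = Qk q lam m n k F \<theta>"
    using Qk_eq_relocate[OF assms(1,2,6,7) k assms(8) \<theta>] by (rule sym)
  have a\<^sub>0: "real k - real (ell m a) = real (a 0)"
    using assms(5) sum_atMost_eq_ell[of a m] by linarith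
  show "Dstar n k (D n k F) \<theta>
      = real (card (UNIV :: 'y set)) * (real k - real (ell m a)) * F \<theta> + Qk q lam m n k F \<theta>"
    by (simp only: Dstar_D[OF \<theta> k] resample relocate a\<^sub>0)
qed

end
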